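(* Let $x\geq0$ and $h\in\mathbb{R}$ satisfy $|h|\leq\frac{1}{3\max\{x,1\}}$. Then \[\exp(-3|h|\max\{x,1\})\leq\frac{1-\Phi(x+h)}{1-\Phi(x)}\leq\exp(3|h|\max\{x,1\}).\]
   Context: $\Phi(x):=\int_{-\infty}^x\frac{e^{-t^2/2}}{\sqrt{2\pi}}dt$ is the standard Gaussian c.d.f. *)

theory Defs
  imports "HOL-Probability.Probability"
begin

definition Phi :: "real \<Rightarrow> real" where
  "Phi x = (LBINT t:{..x}. exp (- t\<^sup>2 / 2) / sqrt (2 * pi))"

end

theory Submission
  imports Defs
begin

text \<open>
  Write \<open>\<phi>\<close> for the standard normal density and \<open>Q = 1 - \<Phi>\<close>. Then \<open>ln Q\<close> has derivative
  \<open>-\<phi>/Q\<close>, minus the hazard rate of the Gaussian. Gordon's lower bound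
  \<open>Q t \<ge> \<phi> t \<cdot> t / (t\<^sup>2 + 1)\<close> bounds the hazard rate by \<open>t + 1/t\<close> for \<open>t > 0\<close>, and a
  direct estimate handles \<open>t \<le> 1/2\<close>; together the hazard rate is at most \<open>3M\<close> on
  \<open>(-\<infinity>, M + 1/3]\<close> for \<open>M \<ge> 1\<close>. So \<open>ln Q\<close> is \<open>3M\<close>-Lipschitz there, and with
  \<open>M = max x 1\<close> the ratio \<open>Q (x + h) / Q x = exp (ln Q (x + h) - ln Q x)\<close> lies between
  \<open>exp (-3M\<bar>h\<bar>)\<close> and \<open>exp (3M\<bar>h\<bar>)\<close>.
\<close>

lemma has_real_derivative_set_integral_atMost:
  fixes f :: "real \<Rightarrow> real"
  assumes int: "integrable lborel f" and cont: "continuous_on UNIV f"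
  shows "((\<lambda>u. LBINT t:{..u}. f t) has_real_derivative f x) (at x)"
proof -
  let ?c = "x - 1"
  have set_int: "set_integrable lborel A f" if "A \<in> sets borel" for A
    unfolding set_integrable_def using integrable_mult_indicator[OF _ int] that by simp
  have split: "(LBINT t:{..u}. f t) = (LBINT t:{..<?c}. f t) + integral {?c..u} f" if "?c \<le> u" for u
  proof -
    have "{..u} = {..<?c} \<union> {?c..u}" using that by auto
    then have "(LBINT t:{..u}. f t) = (LBINT t:{..<?c}. f t) + (LBINT t:{?c..u}. f t)"
      by (simp only:) (rule set_integral_Un, auto intro: set_int)
    also have "(LBINT t:{?c..u}. f t) = integral {?c..u} f"
      by (rule set_borel_integral_eq_integral(2)[OF set_int]) simp
    finally show ?thesis .
  qed
  have "((\<lambda>u. integral {?c..u} f) has_real_derivative f x) (at x within {?c..x + 1})"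
    by (rule integral_has_real_derivative[OF continuous_on_subset[OF cont]]) auto
  then have "((\<lambda>u. integral {?c..u} f) has_real_derivative f x) (at x within {?c<..<x + 1})"
    by (rule has_field_derivative_subset) auto
  then have "((\<lambda>u. integral {?c..u} f) has_real_derivative f x) (at x)"
    using at_within_open[of x "{?c<..<x + 1}"] by simp
  then have "((\<lambda>u. (LBINT t:{..<?c}. f t) + integral {?c..u} f) has_real_derivative f x) (at x)"
    by (auto intro!: derivative_eq_intros)
  then show ?thesis
    by (rule has_field_derivative_transform_within_open[where S="{?c<..}"]) (auto simp: split)
qed

lemma Phi_eq_set_integral: "Phi x = (LBINT t:{..x}. std_normal_density t)"
  by (simp add: Phi_def std_normal_density_def)

lemma Phi_le_1: "Phi x \<le> 1"
proof -
  have "(LBINT t:{..x}. std_normal_density t) \<le> (\<integral>t. std_normal_density t \<partial>lborel)"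
    unfolding set_lebesgue_integral_def
    by (rule integral_mono[OF integrable_mult_indicator[OF _ integrable_normal_density]])
       (auto simp: indicator_def)
  then show ?thesis by (simp add: Phi_eq_set_integral)
qed

lemma has_real_derivative_Phi: "(Phi has_real_derivative std_normal_density x) (at x)"
  unfolding Phi_eq_set_integral[abs_def]
  by (rule has_real_derivative_set_integral_atMost[OF integrable_normal_density])
     (auto simp: normal_density_def intro!: continuous_intros)

lemma has_real_derivative_std_normal_density:
  "(std_normal_density has_real_derivative - x * std_normal_density x) (at x)"
  unfolding std_normal_density_def[abs_def]
  by (auto intro!: derivative_eq_intros simp: power2_eq_square field_simps)

lemma std_normal_density_le: "std_normal_density x \<le> 1 / sqrt (2 * pi)"
  unfolding std_normal_density_def by (intro mult_left_le) auto

lemma std_normal_density_le_1: "std_normal_density x \<le> 1"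
proof -
  have "1 \<le> sqrt (2 * pi)" using pi_gt3 by (simp add: real_le_rsqrt)
  then have "1 / sqrt (2 * pi) \<le> 1" by simp
  then show ?thesis using std_normal_density_le[of x] by linarith
qed

lemma has_real_derivative_Mills_lower_bound:
  "((\<lambda>t. std_normal_density t * t / (t\<^sup>2 + 1)) has_real_derivative
     std_normal_density x * (2 / (x\<^sup>2 + 1)\<^sup>2 - 1)) (at x)"
proof -
  have "x\<^sup>2 + 1 \<noteq> 0" using zero_le_power2[of x] by linarith
  moreover have "((\<lambda>t. t\<^sup>2 + 1) has_real_derivative 2 * x) (at x)"
    by (auto intro!: derivative_eq_intros)
  ultimately have "((\<lambda>t. std_normal_density t * t / (t\<^sup>2 + 1)) has_real_derivative
     ((- x * std_normal_density x * x + 1 * std_normal_density x) * (x\<^sup>2 + 1)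
        - std_normal_density x * x * (2 * x)) / ((x\<^sup>2 + 1) * (x\<^sup>2 + 1))) (at x)"
    by (intro DERIV_divide DERIV_mult has_real_derivative_std_normal_density DERIV_ident)
  moreover have "((- x * std_normal_density x * x + 1 * std_normal_density x) * (x\<^sup>2 + 1)
        - std_normal_density x * x * (2 * x)) / ((x\<^sup>2 + 1) * (x\<^sup>2 + 1))
      = std_normal_density x * (2 - (x\<^sup>2 + 1)\<^sup>2) / (x\<^sup>2 + 1)\<^sup>2"
    by (simp add: power2_eq_square algebra_simps)
  also have "\<dots> = std_normal_density x * (2 / (x\<^sup>2 + 1)\<^sup>2 - 1)"
    using \<open>x\<^sup>2 + 1 \<noteq> 0\<close> by (simp add: field_simps)
  ultimately show ?thesis by simp
qed

lemma Mills_ratio_lower_bound: "std_normal_density z * z / (z\<^sup>2 + 1) \<le> 1 - Phi z"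
proof (rule ccontr)
  \<comment> \<open>\<open>D\<close> is nonincreasing, yet \<open>D b \<ge> -1/b\<close> because \<open>\<phi> \<le> 1\<close>: so \<open>D\<close> is never negative.\<close>
  define D where "D t = 1 - Phi t - std_normal_density t * t / (t\<^sup>2 + 1)" for t
  assume "\<not> ?thesis"
  then have Dz: "D z < 0" by (simp add: D_def)
  define b where "b = max (max z 1) (- 2 / D z)"
  have b: "z \<le> b" "1 \<le> b" "- 2 / D z \<le> b" by (auto simp: b_def)
  have "D b \<le> D z"
  proof (rule DERIV_nonpos_imp_nonincreasing[OF b(1)])
    fix t
    have "(D has_real_derivative - 2 * std_normal_density t / (t\<^sup>2 + 1)\<^sup>2) (at t)"
      unfolding D_def[abs_def]
      using DERIV_diff[OF DERIV_diff[OF DERIV_const has_real_derivative_Phi]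
          has_real_derivative_Mills_lower_bound, of 1 t]
      by (simp add: algebra_simps)
    then show "\<exists>y. (D has_real_derivative y) (at t) \<and> y \<le> 0"
      by (intro exI[of _ "- 2 * std_normal_density t / (t\<^sup>2 + 1)\<^sup>2"]) simp
  qed
  moreover have "- 1 / b \<le> D b"
  proof -
    have "std_normal_density b * b / (b\<^sup>2 + 1) \<le> b / (b\<^sup>2 + 1)"
      using std_normal_density_le_1[of b] b(2)
      by (intro divide_right_mono) (auto intro: mult_left_le_one_le simp: mult.commute)
    also have "\<dots> \<le> 1 / b"
      using b(2) by (simp add: divide_simps power2_eq_square) (use mult_nonneg_nonneg[of b b] in linarith)
    finally show ?thesis using Phi_le_1[of b] by (simp add: D_def)
  qed
  moreover have "D z < - 1 / b"
    using b(2,3) Dz by (simp add: field_simps)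
  ultimately show False by simp
qed

lemma mono_Phi: "mono Phi"
proof (rule monoI)
  fix a b :: real
  assume "a \<le> b"
  then show "Phi a \<le> Phi b"
    by (rule DERIV_nonneg_imp_nondecreasing) (use has_real_derivative_Phi normal_density_nonneg in blast)
qed

lemma Phi_less_1: "Phi t < 1"
proof -
  let ?m = "max t 1"
  have "0 < std_normal_density ?m * ?m / (?m\<^sup>2 + 1)"
    by (simp add: normal_density_pos add_pos_nonneg)
  also have "\<dots> \<le> 1 - Phi ?m" by (rule Mills_ratio_lower_bound)
  also have "\<dots> \<le> 1 - Phi t" using mono_Phi by (simp add: monoD)
  finally show ?thesis by simp
qed

lemma std_normal_density_le_Phi_tail:
  assumes M: "1 \<le> M" and t: "t \<le> M + 1/3"
  shows "std_normal_density t \<le> 3 * M * (1 - Phi t)"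
proof (cases "t \<le> 1/2")
  case True
  have "std_normal_density t \<le> 1 / sqrt (2 * pi)" by (rule std_normal_density_le)
  also have "\<dots> \<le> 3 * (std_normal_density (1/2) * (1/2) / ((1/2)\<^sup>2 + 1))"
  proof -
    have "7/8 \<le> exp (- (1/2)\<^sup>2 / 2 :: real)"
      using exp_ge_add_one_self[of "- (1/2)\<^sup>2 / 2 :: real"] by (simp add: power2_eq_square)
    then show ?thesis by (simp add: std_normal_density_def divide_simps)
  qed
  also have "\<dots> \<le> 3 * (1 - Phi (1/2))" by (intro mult_left_mono Mills_ratio_lower_bound) simp
  also have "\<dots> \<le> 3 * (1 - Phi t)" using mono_Phi True by (simp add: monoD)
  also have "\<dots> \<le> 3 * M * (1 - Phi t)" using M Phi_le_1[of t] by (intro mult_right_mono) auto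
  finally show ?thesis .
next
  case False
  then have "0 < t" by simp
  have "t\<^sup>2 + 1 \<le> 3 * M * t"
  proof -
    \<comment> \<open>\<open>t\<^sup>2 - 3Mt + 1\<close> is convex in \<open>t\<close> and negative at both ends of \<open>[1/2, M + 1/3]\<close>.\<close>
    have "t\<^sup>2 + 1 = 3 * M * t - (t - 1/2) * (M + 1/3 - t) - (t - 1/2) * (2 * M - 5/6) - (3/2 * M - 5/4)"
      by (simp add: power2_eq_square field_simps)
    moreover have "0 \<le> (t - 1/2) * (M + 1/3 - t)" "0 \<le> (t - 1/2) * (2 * M - 5/6)"
      using False t M by (auto intro!: mult_nonneg_nonneg)
    ultimately show ?thesis using M by linarith
  qed
  have "std_normal_density t * t \<le> (t\<^sup>2 + 1) * (1 - Phi t)"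
    using Mills_ratio_lower_bound[of t] zero_le_power2[of t]
    by (simp add: pos_divide_le_eq mult.commute)
  also have "\<dots> \<le> 3 * M * t * (1 - Phi t)"
    using \<open>t\<^sup>2 + 1 \<le> 3 * M * t\<close> Phi_le_1[of t] by (simp add: mult_right_mono)
  finally show ?thesis using \<open>0 < t\<close> by (simp add: mult.commute)
qed

lemma ln_Phi_tail_Lipschitz:
  assumes M: "1 \<le> M" and a: "a \<le> M + 1/3" and b: "b \<le> M + 1/3"
  shows "\<bar>ln (1 - Phi a) - ln (1 - Phi b)\<bar> \<le> 3 * M * \<bar>a - b\<bar>"
proof -
  have "norm (ln (1 - Phi a) - ln (1 - Phi b)) \<le> 3 * M * norm (a - b)"
  proof (rule field_differentiable_bound[of "{..M + 1/3}"])
    fix t :: real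
    assume t: "t \<in> {..M + 1/3}"
    have "1 - Phi t > 0" using Phi_less_1[of t] by simp
    then show "((\<lambda>t. ln (1 - Phi t)) has_field_derivative - std_normal_density t / (1 - Phi t))
        (at t within {..M + 1/3})"
      by (auto intro!: derivative_eq_intros has_field_derivative_at_within[OF has_real_derivative_Phi]
          simp: field_simps)
    show "norm (- std_normal_density t / (1 - Phi t)) \<le> 3 * M"
      using std_normal_density_le_Phi_tail[OF M] t \<open>1 - Phi t > 0\<close> by (simp add: divide_simps)
  qed (use a b in auto)
  then show ?thesis by simp
qed

theorem propositionA2:
  fixes x h :: real
  assumes "x \<ge> 0"
    and "\<bar>h\<bar> \<le> 1 / (3 * max x 1)"
  shows "exp (- 3 * \<bar>h\<bar> * max x 1) \<le> (1 - Phi (x + h)) / (1 - Phi x)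
       \<and> (1 - Phi (x + h)) / (1 - Phi x) \<le> exp (3 * \<bar>h\<bar> * max x 1)"
proof -
  let ?M = "max x 1"
  have "1 / (3 * ?M) \<le> 1/3" by (intro divide_left_mono) auto
  then have "x + h \<le> ?M + 1/3" using assms(2) max.cobounded1[of x 1] by linarith
  then have "\<bar>ln (1 - Phi (x + h)) - ln (1 - Phi x)\<bar> \<le> 3 * ?M * \<bar>h\<bar>"
    using ln_Phi_tail_Lipschitz[of ?M "x + h" x] by auto
  moreover have "(1 - Phi (x + h)) / (1 - Phi x) = exp (ln (1 - Phi (x + h)) - ln (1 - Phi x))"
    using Phi_less_1[of x] Phi_less_1[of "x + h"] by (simp add: exp_diff)
  ultimately show ?thesis by (simp add: abs_le_iff mult_ac)
qed

end
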